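(* Let $m\ge1$, real $p,q$ with $p\wedge q>m-1$, $r=p-m$, $s=q-m$, and let $x_1(t),\dots,x_m(t)$ be the roots of the averaged characteristic polynomial $\chi_t^{(r,s,m)}$ of the Jacobi eigenvalue process (started at a deterministic point of $[0,1]^m$). Let $m_\ell(t)=\frac1m\sum_{i=1}^mx_i(t)^\ell$, $\ell\ge0$ (so $m_0=1$). Then for $t>0$ $$\frac{d}{dt}m_1(t)=p-(p+q)m_1(t),$$ and for every $\ell\ge2$, $$\frac{d}{dt}m_\ell(t)=-\ell(p+q-\ell+1)m_\ell(t)+\ell(p-\ell+1)m_{\ell-1}(t)+m\ell\sum_{k=0}^{\ell-2}\big(m_k(t)-m_{k+1}(t)\big)m_{\ell-1-k}(t).$$
   Context: The Jacobi eigenvalue process solves $d\lambda_t^i=\sqrt{2\lambda_t^i(1-\lambda_t^i)}dB_t^i+[p-(p+q)\lambda_t^i+\sum_{j\ne i}\frac{\lambda_t^i(1-\lambda_t^j)+\lambda_t^j(1-\lambda_t^i)}{\lambda_t^i-\lambda_t^j}]dt$ with independent Brownian motions; $\chi_t^{(r,s,m)}(x)=\mathbb E\prod_i(x-\lambda_t^i)$. Its roots are real, lie in $(0,1)$ for $t>0$, and (suitably indexed) satisfy $\dot x_j=p-(p+q)x_j+\sum_{k\ne j}\frac{x_j(1-x_k)+x_k(1-x_j)}{x_j-x_k}$. *)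

theory Defs
  imports "HOL-Analysis.Analysis"
begin

text \<open>Drift of the root dynamics of the averaged characteristic polynomial
  of the Jacobi eigenvalue process (m roots indexed by 0..m-1).\<close>
definition jacobi_root_drift :: "nat \<Rightarrow> real \<Rightarrow> real \<Rightarrow> (nat \<Rightarrow> real) \<Rightarrow> nat \<Rightarrow> real" where
  "jacobi_root_drift m p q y j =
     p - (p + q) * y j
     + (\<Sum>k\<in>{..<m} - {j}. (y j * (1 - y k) + y k * (1 - y j)) / (y j - y k))"

definition root_moment :: "nat \<Rightarrow> (nat \<Rightarrow> real \<Rightarrow> real) \<Rightarrow> nat \<Rightarrow> real \<Rightarrow> real" where
  "root_moment m x l t = (1 / real m) * (\<Sum>i<m. x i t ^ l)"

end

theory Submission
  imports Defs
begin

(* Along the root dynamics, the derivative of m_(n+1) is (n+1)/m times the sum over j of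
   x_j^n times the drift of x_j. Symmetrising the interaction term in (j, k) replaces x_j^n by
   the divided difference (x_j^n - x_k^n) / (x_j - x_k) = sum_(i<n) x_j^i x_k^(n-1-i), a
   polynomial; so the off-diagonal double sum becomes the full double sum minus its diagonal,
   and both are quadratic in the power sums. *)

definition power_sum :: "'a set \<Rightarrow> ('a \<Rightarrow> real) \<Rightarrow> nat \<Rightarrow> real" where
  "power_sum I y k = (\<Sum>i\<in>I. y i ^ k)"

lemma sum_offdiag_swap:
  fixes F :: "'a \<Rightarrow> 'a \<Rightarrow> real"
  assumes "finite I"
  shows "(\<Sum>j\<in>I. \<Sum>k\<in>I - {j}. F j k) = (\<Sum>j\<in>I. \<Sum>k\<in>I - {j}. F k j)"
proof -
  have offdiag: "(\<Sum>k\<in>I - {j}. G k) = (\<Sum>k\<in>I. if k = j then 0 else G k)" for j and G :: "'a \<Rightarrow> real"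
    using assms by (simp add: sum.If_cases Diff_eq Compl_eq)
  show ?thesis
    unfolding offdiag by (subst sum.swap) (simp add: eq_commute)
qed

lemma sum_offdiag_symmetrize:
  fixes f y :: "'a \<Rightarrow> real" and g :: "'a \<Rightarrow> 'a \<Rightarrow> real"
  assumes "finite I" and g_sym: "\<And>j k. g j k = g k j"
  shows "2 * (\<Sum>j\<in>I. \<Sum>k\<in>I - {j}. f j * g j k / (y j - y k))
       = (\<Sum>j\<in>I. \<Sum>k\<in>I - {j}. (f j - f k) * g j k / (y j - y k))"
proof -
  have "2 * (\<Sum>j\<in>I. \<Sum>k\<in>I - {j}. f j * g j k / (y j - y k))
      = (\<Sum>j\<in>I. \<Sum>k\<in>I - {j}. f j * g j k / (y j - y k))
        + (\<Sum>j\<in>I. \<Sum>k\<in>I - {j}. f k * g k j / (y k - y j))"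
    using sum_offdiag_swap[OF \<open>finite I\<close>, of "\<lambda>j k. f j * g j k / (y j - y k)"] by simp
  also have "\<dots> = (\<Sum>j\<in>I. \<Sum>k\<in>I - {j}. (f j - f k) * g j k / (y j - y k))"
  proof -
    have "f j * g j k / (y j - y k) + f k * g k j / (y k - y j) = (f j - f k) * g j k / (y j - y k)"
      for j k
    proof -
      have "y k - y j = - (y j - y k)" by simp
      then show ?thesis
        by (simp only: g_sym[of k j] divide_minus_right left_diff_distrib diff_divide_distrib)
    qed
    then show ?thesis by (simp add: sum.distrib[symmetric])
  qed
  finally show ?thesis .
qed

definition divdiff_power :: "nat \<Rightarrow> real \<Rightarrow> real \<Rightarrow> real" where
  "divdiff_power n a b = (\<Sum>i<n. a ^ i * b ^ (n - Suc i))"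

lemma divdiff_power_eq:
  assumes "a \<noteq> b"
  shows "(a ^ n - b ^ n) / (a - b) = divdiff_power n a b"
  using assms by (simp add: power_diff_sumr2 divdiff_power_def mult.commute)

lemma divdiff_power_diag: "divdiff_power n a a = real n * a ^ (n - 1)"
proof -
  have "a ^ i * a ^ (n - Suc i) = a ^ (n - 1)" if "i < n" for i
    using that by (simp flip: power_add)
  then show ?thesis
    by (simp add: divdiff_power_def)
qed

lemma divdiff_power_mult_kernel:
  "divdiff_power n a b * (a * (1 - b) + b * (1 - a)) =
   (\<Sum>i<n. a ^ Suc i * b ^ (n - Suc i) + a ^ i * b ^ (n - i) - 2 * (a ^ Suc i * b ^ (n - i)))"
  unfolding divdiff_power_def sum_distrib_right
proof (intro sum.cong refl)
  fix i assume "i \<in> {..<n}"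
  then have "b ^ (n - i) = b * b ^ (n - Suc i)"
    by (simp add: Suc_diff_Suc flip: power_Suc)
  then show "a ^ i * b ^ (n - Suc i) * (a * (1 - b) + b * (1 - a)) =
      a ^ Suc i * b ^ (n - Suc i) + a ^ i * b ^ (n - i) - 2 * (a ^ Suc i * b ^ (n - i))"
    by (simp add: algebra_simps)
qed

lemma sum_sum_divdiff_power_mult_kernel:
  "(\<Sum>j\<in>I. \<Sum>k\<in>I. divdiff_power n (y j) (y k) * (y j * (1 - y k) + y k * (1 - y j))) =
   2 * (\<Sum>i<n. (power_sum I y i - power_sum I y (Suc i)) * power_sum I y (n - i))"
  (is "?lhs = _")
proof -
  let ?S = "power_sum I y"
  have "?lhs = (\<Sum>i<n. \<Sum>j\<in>I. \<Sum>k\<in>I.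
      y j ^ Suc i * y k ^ (n - Suc i) + y j ^ i * y k ^ (n - i) - 2 * (y j ^ Suc i * y k ^ (n - i)))"
    by (simp add: divdiff_power_mult_kernel sum.swap[where A = "{..<n}"])
  also have "\<dots> = (\<Sum>i<n. ?S (Suc i) * ?S (n - Suc i) + ?S i * ?S (n - i) - 2 * (?S (Suc i) * ?S (n - i)))"
    by (simp only: sum.distrib sum_subtractf flip: sum_distrib_left sum_distrib_right power_sum_def)
  also have "\<dots> = 2 * (\<Sum>i<n. (?S i - ?S (Suc i)) * ?S (n - i))"
  proof -
    have "(\<Sum>i<n. ?S (Suc i) * ?S (n - Suc i)) = (\<Sum>i<n. ?S i * ?S (n - i))"
      by (subst sum.nat_diff_reindex[symmetric]) (simp add: Suc_diff_Suc mult.commute)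
    then show ?thesis
      by (simp add: sum.distrib sum_subtractf sum_distrib_left algebra_simps)
  qed
  finally show ?thesis .
qed

lemma sum_divdiff_power_mult_kernel_diag:
  "(\<Sum>j\<in>I. divdiff_power n (y j) (y j) * (y j * (1 - y j) + y j * (1 - y j))) =
   2 * real n * (power_sum I y n - power_sum I y (Suc n))"
proof -
  have diag: "divdiff_power n a a * (a * (1 - a) + a * (1 - a)) = 2 * real n * (a ^ n - a ^ Suc n)"
    for a
    by (cases n) (simp_all add: divdiff_power_diag algebra_simps)
  show ?thesis
    by (simp only: diag power_sum_def sum_distrib_left flip: sum_subtractf)
qed

lemma sum_power_mult_jacobi_root_drift:
  fixes y :: "nat \<Rightarrow> real"
  assumes distinct: "inj_on y {..<m}"
  defines "S \<equiv> power_sum {..<m} y"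
  shows "(\<Sum>j<m. y j ^ n * jacobi_root_drift m p q y j) =
     p * S n - (p + q) * S (Suc n) + (\<Sum>i<n. (S i - S (Suc i)) * S (n - i)) - real n * (S n - S (Suc n))"
proof -
  define K where "K j k = y j * (1 - y k) + y k * (1 - y j)" for j k
  define T where "T = (\<Sum>j<m. \<Sum>k\<in>{..<m} - {j}. y j ^ n * K j k / (y j - y k))"
  have "2 * T = (\<Sum>j<m. \<Sum>k\<in>{..<m} - {j}. (y j ^ n - y k ^ n) * K j k / (y j - y k))"
    unfolding T_def by (rule sum_offdiag_symmetrize) (auto simp: K_def)
  also have "\<dots> = (\<Sum>j<m. \<Sum>k\<in>{..<m} - {j}. divdiff_power n (y j) (y k) * K j k)"
  proof (intro sum.cong refl)
    fix j k assume "j \<in> {..<m}" "k \<in> {..<m} - {j}"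
    then have "y j \<noteq> y k"
      using distinct by (auto dest: inj_onD)
    then show "(y j ^ n - y k ^ n) * K j k / (y j - y k) = divdiff_power n (y j) (y k) * K j k"
      by (simp flip: divdiff_power_eq times_divide_eq_left)
  qed
  also have "\<dots> = (\<Sum>j<m. \<Sum>k<m. divdiff_power n (y j) (y k) * K j k)
      - (\<Sum>j<m. divdiff_power n (y j) (y j) * K j j)"
    by (simp add: sum_diff1 sum_subtractf)
  also have "\<dots> = 2 * (\<Sum>i<n. (S i - S (Suc i)) * S (n - i)) - 2 * real n * (S n - S (Suc n))"
    unfolding K_def S_def sum_sum_divdiff_power_mult_kernel sum_divdiff_power_mult_kernel_diag ..
  finally have T: "T = (\<Sum>i<n. (S i - S (Suc i)) * S (n - i)) - real n * (S n - S (Suc n))"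
    by simp
  have "(\<Sum>j<m. y j ^ n * jacobi_root_drift m p q y j) = p * S n - (p + q) * S (Suc n) + T"
    by (simp add: jacobi_root_drift_def S_def T_def K_def power_sum_def algebra_simps
        sum.distrib sum_subtractf sum_distrib_left)
  with T show ?thesis
    by simp
qed

lemma has_real_derivative_sum_power:
  assumes "\<And>j. j \<in> I \<Longrightarrow> ((\<lambda>s. x j s) has_real_derivative x' j) (at t)"
  shows "((\<lambda>s. \<Sum>j\<in>I. x j s ^ Suc n) has_real_derivative
      real (Suc n) * (\<Sum>j\<in>I. x j t ^ n * x' j)) (at t)"
  unfolding sum_distrib_left
  by (rule DERIV_sum, rule DERIV_cong[OF DERIV_power[OF assms]]) (auto simp: algebra_simps)

lemma root_moment_Suc_has_real_derivative:
  assumes distinct: "inj_on (\<lambda>i. x i t) {..<m}"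
    and ode: "\<And>j. j < m \<Longrightarrow>
      ((\<lambda>s. x j s) has_real_derivative jacobi_root_drift m p q (\<lambda>i. x i t) j) (at t)"
  defines "M \<equiv> \<lambda>k. root_moment m x k t"
  shows "((\<lambda>s. root_moment m x (Suc n) s) has_real_derivative
      real (Suc n) * (p - real n) * M n - real (Suc n) * (p + q - real n) * M (Suc n)
      + real m * real (Suc n) * (\<Sum>k<n. (M k - M (Suc k)) * M (n - k))) (at t)"
proof -
  let ?S = "power_sum {..<m} (\<lambda>i. x i t)"
  have M: "M k = ?S k / real m" for k
    by (simp add: M_def root_moment_def power_sum_def)
  have sum_M: "(\<Sum>k<n. (M k - M (Suc k)) * M (n - k))
      = (\<Sum>k<n. (?S k - ?S (Suc k)) * ?S (n - k)) / (real m * real m)"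
    unfolding M sum_divide_distrib by (intro sum.cong refl) (simp add: divide_simps)
  have "((\<lambda>s. root_moment m x (Suc n) s) has_real_derivative
      1 / real m * (real (Suc n) * (\<Sum>j<m. x j t ^ n * jacobi_root_drift m p q (\<lambda>i. x i t) j))) (at t)"
    unfolding root_moment_def using ode
    by (intro DERIV_cmult has_real_derivative_sum_power) simp
  moreover have "1 / real m * (real (Suc n) * (\<Sum>j<m. x j t ^ n * jacobi_root_drift m p q (\<lambda>i. x i t) j))
    = real (Suc n) * (p - real n) * M n - real (Suc n) * (p + q - real n) * M (Suc n)
      + real m * real (Suc n) * (\<Sum>k<n. (M k - M (Suc k)) * M (n - k))"
  proof -
    have "1 / real m * (real (Suc n) * (p * A - (p + q) * B + C - real n * (A - B)))
      = real (Suc n) * (p - real n) * (A / real m) - real (Suc n) * (p + q - real n) * (B / real m)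
        + real m * real (Suc n) * (C / (real m * real m))" for A B C
      by (cases "m = 0") (simp_all add: field_simps)
    then show ?thesis
      unfolding sum_power_mult_jacobi_root_drift[OF distinct] sum_M unfolding M .
  qed
  ultimately show ?thesis
    by simp
qed

corollary root_moment_1_has_real_derivative:
  assumes "inj_on (\<lambda>i. x i t) {..<m}"
    and "\<And>j. j < m \<Longrightarrow>
      ((\<lambda>s. x j s) has_real_derivative jacobi_root_drift m p q (\<lambda>i. x i t) j) (at t)"
    and "m \<ge> 1"
  shows "((\<lambda>s. root_moment m x 1 s) has_real_derivative p - (p + q) * root_moment m x 1 t) (at t)"
proof -
  have "root_moment m x 0 t = 1"
    using \<open>m \<ge> 1\<close> by (simp add: root_moment_def)
  with root_moment_Suc_has_real_derivative[OF assms(1,2), of 0] show ?thesis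
    by simp
qed

corollary root_moment_has_real_derivative:
  assumes "inj_on (\<lambda>i. x i t) {..<m}"
    and "\<And>j. j < m \<Longrightarrow>
      ((\<lambda>s. x j s) has_real_derivative jacobi_root_drift m p q (\<lambda>i. x i t) j) (at t)"
    and "l \<ge> 2"
  shows "((\<lambda>s. root_moment m x l s) has_real_derivative
      - real l * (p + q - real l + 1) * root_moment m x l t
      + real l * (p - real l + 1) * root_moment m x (l - 1) t
      + real m * real l * (\<Sum>k=0..l-2. (root_moment m x k t - root_moment m x (k+1) t)
                                        * root_moment m x (l - 1 - k) t)) (at t)"
proof -
  define n where "n = l - 1"
  have l: "l = Suc n" and range: "{0..l-2} = {..<n}"
    using \<open>l \<ge> 2\<close> by (auto simp: n_def)
  have rhs: "- real l * (p + q - real l + 1) * root_moment m x l t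
      + real l * (p - real l + 1) * root_moment m x (l - 1) t
      + real m * real l * (\<Sum>k=0..l-2. (root_moment m x k t - root_moment m x (k+1) t)
                                        * root_moment m x (l - 1 - k) t)
    = real (Suc n) * (p - real n) * root_moment m x n t
      - real (Suc n) * (p + q - real n) * root_moment m x (Suc n) t
      + real m * real (Suc n) * (\<Sum>k<n. (root_moment m x k t - root_moment m x (Suc k) t)
                                        * root_moment m x (n - k) t)"
    unfolding range unfolding l by (simp add: algebra_simps)
  show ?thesis
    unfolding rhs unfolding l by (rule root_moment_Suc_has_real_derivative[OF assms(1,2)])
qed

theorem mainTheorem8:
  fixes m :: nat and p q :: real and x :: "nat \<Rightarrow> real \<Rightarrow> real"
  assumes m_pos: "m \<ge> 1"
    and pq: "min p q > real m - 1"
    and roots_in: "\<And>t i. t > 0 \<Longrightarrow> i < m \<Longrightarrow> 0 < x i t \<and> x i t < 1"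
    and roots_distinct: "\<And>t i j. t > 0 \<Longrightarrow> i < m \<Longrightarrow> j < m \<Longrightarrow> i \<noteq> j \<Longrightarrow> x i t \<noteq> x j t"
    and roots_ode: "\<And>t j. t > 0 \<Longrightarrow> j < m \<Longrightarrow>
        ((\<lambda>s. x j s) has_real_derivative jacobi_root_drift m p q (\<lambda>i. x i t) j) (at t)"
  shows "\<forall>t>0.
      ((\<lambda>s. root_moment m x 1 s) has_real_derivative (p - (p + q) * root_moment m x 1 t)) (at t)
    \<and> (\<forall>l\<ge>2. ((\<lambda>s. root_moment m x l s) has_real_derivative
          (- real l * (p + q - real l + 1) * root_moment m x l t
           + real l * (p - real l + 1) * root_moment m x (l - 1) t
           + real m * real l * (\<Sum>k=0..l-2. (root_moment m x k t - root_moment m x (k+1) t)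
                                             * root_moment m x (l - 1 - k) t))) (at t))"
proof -
  have distinct: "inj_on (\<lambda>i. x i t) {..<m}" if "t > 0" for t
    using roots_distinct that by (auto intro: inj_onI)
  show ?thesis
    using distinct roots_ode m_pos
    by (blast intro: root_moment_1_has_real_derivative root_moment_has_real_derivative)
qed

end
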